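(* Let $L$ be a Lie algebra and $I$ an ideal of $L$ with $I\subseteq Z^{*}_2(L)$. Then the natural Lie homomorphism $\mathcal{M}^{(2)}(L)\to\mathcal{M}^{(2)}(L/I)$ is a monomorphism.
   Context: All Lie algebras are over a fixed field. For $L$ with free presentation $L\cong F/R$, the $2$-nilpotent multiplier is $\mathcal{M}^{(2)}(L)=(R\cap F^{3})/[[R,F],F]$ with $F^3=[[F,F],F]$; if $I\cong S/R$ with $R\subseteq S$, then $L/I\cong F/S$ and the natural homomorphism $\mathcal{M}^{(2)}(L)\to\mathcal{M}^{(2)}(L/I)=(S\cap F^3)/[[S,F],F]$ is induced by inclusion. With $\pi:F/[[R,F],F]\to F/R$ the natural epimorphism, $Z^{*}_2(L)=\pi\big(Z_2(F/[[R,F],F])\big)$, where $Z_2$ denotes the second term of the upper central series. *)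

theory Defs
  imports Main
begin

text \<open>
  Concrete model of the free Lie algebra over a field 'k on the generating set UNIV :: 'x set:
  the Lie subalgebra generated by the letters inside the free associative algebra
  k<X>, whose elements are represented as coefficient functions on words ('x list).
  Every free Lie algebra is isomorphic to one of these (free Lie algebras embed in
  their universal enveloping algebra, the tensor algebra).
\<close>

type_synonym ('x, 'k) ncp = "'x list \<Rightarrow> 'k"

definition pzero :: "('x, 'k::field) ncp" where
  "pzero = (\<lambda>w. 0)"

definition padd :: "('x, 'k::field) ncp \<Rightarrow> ('x, 'k) ncp \<Rightarrow> ('x, 'k) ncp" where
  "padd f g = (\<lambda>w. f w + g w)"

definition psub :: "('x, 'k::field) ncp \<Rightarrow> ('x, 'k) ncp \<Rightarrow> ('x, 'k) ncp" where
  "psub f g = (\<lambda>w. f w - g w)"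

definition psmult :: "'k::field \<Rightarrow> ('x, 'k) ncp \<Rightarrow> ('x, 'k) ncp" where
  "psmult c f = (\<lambda>w. c * f w)"

definition pmul :: "('x, 'k::field) ncp \<Rightarrow> ('x, 'k) ncp \<Rightarrow> ('x, 'k) ncp" where
  "pmul f g = (\<lambda>w. \<Sum>i\<in>{0..length w}. f (take i w) * g (drop i w))"

definition pbr :: "('x, 'k::field) ncp \<Rightarrow> ('x, 'k) ncp \<Rightarrow> ('x, 'k) ncp" where
  "pbr f g = psub (pmul f g) (pmul g f)"

definition pgen :: "'x \<Rightarrow> ('x, 'k::field) ncp" where
  "pgen x = (\<lambda>w. if w = [x] then 1 else 0)"

inductive_set free_lie :: "('x, 'k::field) ncp set" where
  gen: "pgen x \<in> free_lie"
| zero: "pzero \<in> free_lie"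
| add: "f \<in> free_lie \<Longrightarrow> g \<in> free_lie \<Longrightarrow> padd f g \<in> free_lie"
| smult: "f \<in> free_lie \<Longrightarrow> psmult c f \<in> free_lie"
| br: "f \<in> free_lie \<Longrightarrow> g \<in> free_lie \<Longrightarrow> pbr f g \<in> free_lie"

inductive_set lspan :: "('x, 'k::field) ncp set \<Rightarrow> ('x, 'k) ncp set" for A where
  base: "a \<in> A \<Longrightarrow> a \<in> lspan A"
| zero: "pzero \<in> lspan A"
| add: "f \<in> lspan A \<Longrightarrow> g \<in> lspan A \<Longrightarrow> padd f g \<in> lspan A"
| smult: "f \<in> lspan A \<Longrightarrow> psmult c f \<in> lspan A"

definition brs :: "('x, 'k::field) ncp set \<Rightarrow> ('x, 'k) ncp set \<Rightarrow> ('x, 'k) ncp set" where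
  "brs A B = lspan {pbr a b | a b. a \<in> A \<and> b \<in> B}"

definition is_ideal :: "('x, 'k::field) ncp set \<Rightarrow> ('x, 'k) ncp set \<Rightarrow> bool" where
  "is_ideal L I \<longleftrightarrow> I \<subseteq> L \<and> pzero \<in> I
     \<and> (\<forall>f\<in>I. \<forall>g\<in>I. padd f g \<in> I) \<and> (\<forall>c f. f \<in> I \<longrightarrow> psmult c f \<in> I)
     \<and> (\<forall>i\<in>I. \<forall>x\<in>L. pbr i x \<in> I)"

definition coset :: "('x, 'k::field) ncp set \<Rightarrow> ('x, 'k) ncp \<Rightarrow> ('x, 'k) ncp set" where
  "coset A x = {padd x a | a. a \<in> A}"

definition F3 :: "('x, 'k::field) ncp set" where
  "F3 = brs (brs free_lie free_lie) free_lie"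

definition RFF :: "('x, 'k::field) ncp set \<Rightarrow> ('x, 'k) ncp set" where
  "RFF R = brs (brs R free_lie) free_lie"

text \<open>Preimages in L of the upper central series terms of L/N:
  zeta1 L N / N = Z(L/N), zeta2 L N / N = Z_2(L/N) (i.e. zeta2/N / zeta1/N = Z((L/N)/(zeta1/N))).\<close>
definition zeta1 :: "('x, 'k::field) ncp set \<Rightarrow> ('x, 'k) ncp set \<Rightarrow> ('x, 'k) ncp set" where
  "zeta1 L N = {z \<in> L. \<forall>y\<in>L. pbr z y \<in> N}"

definition zeta2 :: "('x, 'k::field) ncp set \<Rightarrow> ('x, 'k) ncp set \<Rightarrow> ('x, 'k) ncp set" where
  "zeta2 L N = {z \<in> L. \<forall>y\<in>L. pbr z y \<in> zeta1 L N}"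

text \<open>For L = F/R: Z*_2(L) = pi(Z_2(F/[[R,F],F])), as a set of cosets of R.\<close>
definition Zstar2 :: "('x, 'k::field) ncp set \<Rightarrow> ('x, 'k) ncp set set" where
  "Zstar2 R = (\<lambda>t. coset R t) ` zeta2 free_lie (RFF R)"

text \<open>The 2-nilpotent multiplier M^(2)(F/R) = (R \<inter> F^3)/[[R,F],F], as a set of cosets.\<close>
definition M2 :: "('x, 'k::field) ncp set \<Rightarrow> ('x, 'k) ncp set set" where
  "M2 R = (\<lambda>x. coset (RFF R) x) ` (R \<inter> F3)"

text \<open>The natural map M^(2)(F/R) \<rightarrow> M^(2)(F/S) induced by inclusion (R \<subseteq> S):
  a coset x + [[R,F],F] is sent to its image x + [[S,F],F].\<close>
definition M2_map :: "('x, 'k::field) ncp set \<Rightarrow> ('x, 'k) ncp set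
    \<Rightarrow> ('x, 'k) ncp set \<Rightarrow> ('x, 'k) ncp set" where
  "M2_map R S C = (\<Union>x\<in>C. coset (RFF S) x)"

end

theory Submission
  imports Defs
begin

text \<open>
  Every \<open>s \<in> S\<close> has the form \<open>t + r\<close> with \<open>r \<in> R\<close> and \<open>t\<close> central modulo \<open>[[R,F],F]\<close>
  after one bracket with \<open>F\<close>. Hence each generator \<open>[[s,f],g]\<close> of \<open>[[S,F],F]\<close> splits as
  \<open>[[t,f],g] + [[r,f],g]\<close> with both summands in \<open>[[R,F],F]\<close>, so \<open>[[S,F],F] \<subseteq> [[R,F],F]\<close>.
  The natural map then sends each coset \<open>x + [[R,F],F]\<close> to itself, so it is injective.
\<close>

lemma pmul_padd_left: "pmul (padd f g) h = padd (pmul f h) (pmul g h)"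
  unfolding pmul_def padd_def by (rule ext) (simp add: distrib_right sum.distrib)

lemma pmul_padd_right: "pmul h (padd f g) = padd (pmul h f) (pmul h g)"
  unfolding pmul_def padd_def by (rule ext) (simp add: distrib_left sum.distrib)

lemma pmul_pzero_left: "pmul pzero h = pzero"
  unfolding pmul_def pzero_def by (rule ext) simp

lemma pmul_pzero_right: "pmul h pzero = pzero"
  unfolding pmul_def pzero_def by (rule ext) simp

lemma pmul_psmult_left: "pmul (psmult c f) h = psmult c (pmul f h)"
  unfolding pmul_def psmult_def by (rule ext) (simp add: sum_distrib_left mult.assoc)

lemma pmul_psmult_right: "pmul h (psmult c f) = psmult c (pmul h f)"
  unfolding pmul_def psmult_def by (rule ext) (simp add: sum_distrib_left algebra_simps)

lemma pbr_padd_left: "pbr (padd f g) h = padd (pbr f h) (pbr g h)"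
  unfolding pbr_def by (simp add: pmul_padd_left pmul_padd_right) (auto simp: psub_def padd_def)

lemma pbr_pzero_left: "pbr pzero h = pzero"
  unfolding pbr_def by (simp add: pmul_pzero_left pmul_pzero_right) (simp add: psub_def pzero_def)

lemma pbr_psmult_left: "pbr (psmult c f) h = psmult c (pbr f h)"
  unfolding pbr_def by (simp add: pmul_psmult_left pmul_psmult_right)
    (auto simp: psub_def psmult_def algebra_simps)

lemma padd_pzero_right: "padd x pzero = x"
  by (simp add: padd_def pzero_def)

lemma padd_assoc: "padd (padd x a) b = padd x (padd a b)"
  by (simp add: padd_def add.assoc)

lemma lspan_subset_lspan: "A \<subseteq> lspan B \<Longrightarrow> lspan A \<subseteq> lspan B"
proof
  fix x assume "A \<subseteq> lspan B" "x \<in> lspan A"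
  then show "x \<in> lspan B"
    by (induction rule: lspan.induct[OF \<open>x \<in> lspan A\<close>]) (auto intro: lspan.intros)
qed

lemma pbr_lspan_left:
  assumes "f \<in> lspan A" and "\<And>a. a \<in> A \<Longrightarrow> pbr a g \<in> lspan C"
  shows "pbr f g \<in> lspan C"
  using assms(1)
  by (induction rule: lspan.induct)
    (auto simp: assms(2) pbr_padd_left pbr_pzero_left pbr_psmult_left intro: lspan.intros)

lemma RFF_subset_RFF:
  fixes R S :: "('x, 'k::field) ncp set"
  assumes "\<And>s. s \<in> S \<Longrightarrow> \<exists>t r. s = padd t r \<and> t \<in> zeta2 free_lie (RFF R) \<and> r \<in> R"
  shows "RFF S \<subseteq> RFF R"
  unfolding RFF_def brs_def[of "brs S free_lie"] brs_def[of "brs R free_lie"]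
proof (rule lspan_subset_lspan, safe)
  fix a g :: "('x, 'k) ncp"
  assume "a \<in> brs S free_lie" "g \<in> free_lie"
  let ?C = "{pbr u v |u v. u \<in> brs R free_lie \<and> v \<in> free_lie}"
  show "pbr a g \<in> lspan ?C"
    using \<open>a \<in> brs S free_lie\<close>[unfolded brs_def]
  proof (rule pbr_lspan_left, safe)
    fix s f :: "('x, 'k) ncp"
    assume "s \<in> S" "f \<in> free_lie"
    then obtain t r where s: "s = padd t r" "t \<in> zeta2 free_lie (RFF R)" "r \<in> R"
      using assms by blast
    have "pbr (pbr t f) g \<in> lspan ?C"
      using s(2) \<open>f \<in> free_lie\<close> \<open>g \<in> free_lie\<close>
      unfolding zeta2_def zeta1_def RFF_def brs_def by blast
    moreover have "pbr r f \<in> brs R free_lie"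
      unfolding brs_def using s(3) \<open>f \<in> free_lie\<close> by (blast intro: lspan.base)
    then have "pbr (pbr r f) g \<in> lspan ?C"
      using \<open>g \<in> free_lie\<close> by (blast intro: lspan.base)
    ultimately show "pbr (pbr s f) g \<in> lspan ?C"
      by (simp add: s(1) pbr_padd_left lspan.add)
  qed
qed

lemma coset_self: "pzero \<in> A \<Longrightarrow> x \<in> coset A x"
  unfolding coset_def by (auto intro!: exI[of _ pzero] simp: padd_pzero_right)

lemma Union_coset_coset_lspan:
  assumes "B \<subseteq> lspan A" and "pzero \<in> B"
  shows "(\<Union>z\<in>coset (lspan A) x. coset B z) = coset (lspan A) x"
proof
  show "(\<Union>z\<in>coset (lspan A) x. coset B z) \<subseteq> coset (lspan A) x"
  proof
    fix y assume "y \<in> (\<Union>z\<in>coset (lspan A) x. coset B z)"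
    then obtain a b where "a \<in> lspan A" "b \<in> B" "y = padd (padd x a) b"
      unfolding coset_def by blast
    moreover have "padd a b \<in> lspan A"
      using calculation assms(1) by (blast intro: lspan.add)
    ultimately show "y \<in> coset (lspan A) x"
      unfolding coset_def by (auto simp: padd_assoc)
  qed
  show "coset (lspan A) x \<subseteq> (\<Union>z\<in>coset (lspan A) x. coset B z)"
    using coset_self[OF assms(2)] by blast
qed

theorem theorem3p2:
  fixes R S :: "('x list \<Rightarrow> 'k::field) set"
  assumes "is_ideal free_lie R"
    and "is_ideal free_lie S"
    and "R \<subseteq> S"
    and "(\<lambda>s. coset R s) ` S \<subseteq> Zstar2 R"
  shows "inj_on (M2_map R S) (M2 R)"
proof -
  have "pzero \<in> R"
    using assms(1) unfolding is_ideal_def by blast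
  have "RFF S \<subseteq> RFF R"
  proof (rule RFF_subset_RFF)
    fix s assume "s \<in> S"
    then obtain t where "t \<in> zeta2 free_lie (RFF R)" "coset R s = coset R t"
      using assms(4) unfolding Zstar2_def by blast
    then show "\<exists>t r. s = padd t r \<and> t \<in> zeta2 free_lie (RFF R) \<and> r \<in> R"
      using coset_self[OF \<open>pzero \<in> R\<close>, of s] unfolding coset_def by blast
  qed
  moreover have "pzero \<in> RFF S"
    unfolding RFF_def brs_def by (rule lspan.zero)
  ultimately have "M2_map R S (coset (RFF R) x) = coset (RFF R) x" for x
    unfolding M2_map_def RFF_def brs_def[of "brs R free_lie"]
    by (intro Union_coset_coset_lspan) (simp_all add: RFF_def brs_def)
  then show ?thesis
    unfolding inj_on_def M2_def by auto
qed

end
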